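(* Let $t_o<t_f$ be nonnegative integers, let $p:\{t_o,\dots,t_f-1\}\to\mathbb{R}$ and $q:\{t_o,\dots,t_f-1\}\to\mathbb{R}_{\ge0}$ satisfy $q(t)=0\implies p(t)=0$ for every $t$, and let $r(\tau)=\alpha\tau$ for integers $\tau>0$, with $\alpha\in\mathbb{R}$. For integers $t_o\le t_0<t_1\le t_f$ with $\sum_{t=t_0}^{t_1-1}q(t)>0$ define $$\psi(t_0,t_1)=\frac{\sum_{t=t_0}^{t_1-1}p(t)+r(t_1-t_0)}{\sum_{t=t_0}^{t_1-1}q(t)}.$$ Let $\Psi$ be the set of integer pairs with $t_o\le t_0<t_1\le t_f$, $\Psi_q=\{(t_0,t_1)\in\Psi:q(t)=0\ \text{for all } t_0\le t<t_1\}$, and $\tilde\Psi_q=\{t\in\{t_o,\dots,t_f-1\}:q(t)=0\}$. Then: (i) if $r(\tau)\le0$ for all $\tau\in\mathbb{Z}_{>0}$, $\displaystyle\max_{(t_0,t_1)\in\Psi\setminus\Psi_q}\psi(t_0,t_1)=\max_{t\in\{t_o,\dots,t_f-1\}\setminus\tilde\Psi_q}\psi(t,t+1)$; (ii) if $r(\tau)\ge0$ for all $\tau\in\mathbb{Z}_{>0}$, $\displaystyle\min_{(t_0,t_1)\in\Psi\setminus\Psi_q}\psi(t_0,t_1)=\min_{t\in\{t_o,\dots,t_f-1\}\setminus\tilde\Psi_q}\psi(t,t+1)$; where $\psi(t,t+1)=\dfrac{p(t)+r(1)}{q(t)}$.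
   Context: This is the discrete-time fractional function $\frac{\sum p+r}{\sum q+s}$ with the discrete linear map $s$ in the denominator identically zero; $r:\mathbb{Z}_{>0}\to\mathbb{R}$ is a discrete linear mapping. *)

theory Defs
  imports Main "HOL.Real"
begin

definition psi :: "(nat \<Rightarrow> real) \<Rightarrow> (nat \<Rightarrow> real) \<Rightarrow> (int \<Rightarrow> real) \<Rightarrow> nat \<Rightarrow> nat \<Rightarrow> real" where
  "psi p q r t0 t1 = ((\<Sum>t=t0..<t1. p t) + r (int t1 - int t0)) / (\<Sum>t=t0..<t1. q t)"

definition Psi :: "nat \<Rightarrow> nat \<Rightarrow> (nat \<times> nat) set" where
  "Psi to tf = {(t0, t1). to \<le> t0 \<and> t0 < t1 \<and> t1 \<le> tf}"

definition Psi_q :: "(nat \<Rightarrow> real) \<Rightarrow> nat \<Rightarrow> nat \<Rightarrow> (nat \<times> nat) set" where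
  "Psi_q q to tf = {(t0, t1) \<in> Psi to tf. \<forall>t. t0 \<le> t \<and> t < t1 \<longrightarrow> q t = 0}"

definition Psi_q_tilde :: "(nat \<Rightarrow> real) \<Rightarrow> nat \<Rightarrow> nat \<Rightarrow> nat set" where
  "Psi_q_tilde q to tf = {t \<in> {to..<tf}. q t = 0}"

end

theory Submission
  imports Defs
begin

text \<open>For r(\<tau>) = \<alpha>\<tau> the numerator of psi(t0,t1) is the sum of p t + \<alpha> over the window, so
  psi(t0,t1) is a mediant of the one-step values (p t + \<alpha>) / q t with weights q t. A step with
  q t = 0 adds only \<alpha> to the numerator and nothing to the denominator; when \<alpha> \<le> 0 this can only
  lower the mediant, so psi(t0,t1) is at most the largest one-step value inside the window, and
  dually for \<alpha> \<ge> 0. Since every single step is itself a window, the extrema coincide.\<close>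

lemma sum_divide_sum_le:
  fixes a b :: "'a \<Rightarrow> real"
  assumes "\<And>x. x \<in> S \<Longrightarrow> a x \<le> M * b x" and "sum b S > 0"
  shows "sum a S / sum b S \<le> M"
proof -
  have "sum a S \<le> M * sum b S"
    using assms(1) by (simp add: sum_distrib_left sum_mono)
  then show ?thesis
    using assms(2) by (simp add: pos_divide_le_eq mult.commute)
qed

lemma Min_eq_if:
  fixes A B :: "'a::linorder set"
  assumes "finite A" "finite B" "\<forall>a\<in>A. \<exists>b\<in>B. b \<le> a" "\<forall>b\<in>B. \<exists>a\<in>A. a \<le> b"
  shows "Min A = Min B"
proof cases
  assume "A = {}" then show ?thesis using assms by simp
next
  assume "A \<noteq> {}" then show ?thesis using assms
    by (blast intro: order.antisym Min_in Min_le_iff[THEN iffD2])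
qed

lemma psi_of_linear_r:
  assumes "\<And>\<tau>. \<tau> > 0 \<Longrightarrow> r \<tau> = \<alpha> * of_int \<tau>" and "t0 < t1"
  shows "psi p q r t0 t1 = (\<Sum>t=t0..<t1. p t + \<alpha>) / (\<Sum>t=t0..<t1. q t)"
  using assms by (simp add: psi_def sum.distrib of_nat_diff)

lemma psi_uminus: "psi (\<lambda>t. - p t) q (\<lambda>\<tau>. - r \<tau>) t0 t1 = - psi p q r t0 t1"
  by (simp add: psi_def sum_negf minus_divide_left)

lemma psi_le_of_steps_le:
  fixes p q :: "nat \<Rightarrow> real" and r :: "int \<Rightarrow> real"
  assumes q_nonneg: "\<And>t. t \<in> {t0..<t1} \<Longrightarrow> q t \<ge> 0"
    and p_zero: "\<And>t. t \<in> {t0..<t1} \<Longrightarrow> q t = 0 \<Longrightarrow> p t = 0"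
    and r_linear: "\<And>\<tau>. \<tau> > 0 \<Longrightarrow> r \<tau> = \<alpha> * of_int \<tau>" and "\<alpha> \<le> 0"
    and nontrivial: "s \<in> {t0..<t1}" "q s \<noteq> 0"
    and steps_le: "\<And>t. t \<in> {t0..<t1} \<Longrightarrow> q t \<noteq> 0 \<Longrightarrow> psi p q r t (t + 1) \<le> M"
  shows "psi p q r t0 t1 \<le> M"
proof -
  have pointwise: "p t + \<alpha> \<le> M * q t" if "t \<in> {t0..<t1}" for t
  proof (cases "q t = 0")
    case True
    then show ?thesis using p_zero that \<open>\<alpha> \<le> 0\<close> by simp
  next
    case False
    then have "q t > 0" using q_nonneg[OF that] by simp
    moreover have "(p t + \<alpha>) / q t \<le> M"
      using steps_le[OF that False] psi_of_linear_r[OF r_linear, of t "t + 1"] by simp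
    ultimately show ?thesis by (simp add: pos_divide_le_eq)
  qed
  have "q s \<le> sum q {t0..<t1}"
    using nontrivial(1) q_nonneg by (intro member_le_sum) auto
  then have q_sum_pos: "sum q {t0..<t1} > 0"
    using q_nonneg[OF nontrivial(1)] nontrivial(2) by simp
  have "psi p q r t0 t1 = (\<Sum>t=t0..<t1. p t + \<alpha>) / (\<Sum>t=t0..<t1. q t)"
    using r_linear by (rule psi_of_linear_r) (use nontrivial(1) in auto)
  also have "\<dots> \<le> M"
    using pointwise q_sum_pos by (rule sum_divide_sum_le)
  finally show ?thesis .
qed

lemma psi_window_le_step:
  fixes p q :: "nat \<Rightarrow> real" and r :: "int \<Rightarrow> real"
  assumes q_nonneg: "\<And>t. t \<in> {to..<tf} \<Longrightarrow> q t \<ge> 0"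
    and p_zero: "\<And>t. t \<in> {to..<tf} \<Longrightarrow> q t = 0 \<Longrightarrow> p t = 0"
    and r_linear: "\<And>\<tau>. \<tau> > 0 \<Longrightarrow> r \<tau> = \<alpha> * of_int \<tau>" and "\<alpha> \<le> 0"
    and window: "(t0, t1) \<in> Psi to tf - Psi_q q to tf"
  shows "\<exists>t\<in>{to..<tf} - Psi_q_tilde q to tf. psi p q r t0 t1 \<le> psi p q r t (t + 1)"
proof -
  define S where "S = {t\<in>{t0..<t1}. q t \<noteq> 0}"
  have range: "to \<le> t0" "t1 \<le> tf"
    using window by (simp_all add: Psi_def)
  have "finite S"
    by (simp add: S_def)
  moreover have "S \<noteq> {}"
    using window by (auto simp: Psi_def Psi_q_def S_def)
  ultimately obtain s where "s \<in> S"
    and s_max: "Max ((\<lambda>t. psi p q r t (t + 1)) ` S) = psi p q r s (s + 1)"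
    by (rule obtains_MAX)
  have "psi p q r t0 t1 \<le> psi p q r s (s + 1)"
  proof (rule psi_le_of_steps_le[OF _ _ r_linear \<open>\<alpha> \<le> 0\<close>])
    show "s \<in> {t0..<t1}" "q s \<noteq> 0" using \<open>s \<in> S\<close> by (simp_all add: S_def)
    show "psi p q r t (t + 1) \<le> psi p q r s (s + 1)" if "t \<in> {t0..<t1}" "q t \<noteq> 0" for t
      unfolding s_max[symmetric] using that \<open>finite S\<close> by (intro Max_ge) (auto simp: S_def)
  qed (use range q_nonneg p_zero in simp_all)
  moreover have "s \<in> {to..<tf} - Psi_q_tilde q to tf"
    using \<open>s \<in> S\<close> range by (auto simp: S_def Psi_q_tilde_def)
  ultimately show ?thesis by blast
qed

lemma psi_step_le_window:
  fixes p q :: "nat \<Rightarrow> real" and r :: "int \<Rightarrow> real"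
  assumes "\<And>t. t \<in> {to..<tf} \<Longrightarrow> q t \<ge> 0"
    and "\<And>t. t \<in> {to..<tf} \<Longrightarrow> q t = 0 \<Longrightarrow> p t = 0"
    and "\<And>\<tau>. \<tau> > 0 \<Longrightarrow> r \<tau> = \<alpha> * of_int \<tau>" and "\<alpha> \<ge> 0"
    and "(t0, t1) \<in> Psi to tf - Psi_q q to tf"
  shows "\<exists>t\<in>{to..<tf} - Psi_q_tilde q to tf. psi p q r t (t + 1) \<le> psi p q r t0 t1"
proof -
  have "\<exists>t\<in>{to..<tf} - Psi_q_tilde q to tf.
      psi (\<lambda>t. - p t) q (\<lambda>\<tau>. - r \<tau>) t0 t1 \<le> psi (\<lambda>t. - p t) q (\<lambda>\<tau>. - r \<tau>) t (t + 1)"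
    by (rule psi_window_le_step[where \<alpha> = "- \<alpha>"]) (use assms in auto)
  then show ?thesis by (simp add: psi_uminus)
qed

lemma finite_Psi: "finite (Psi to tf)"
  by (rule finite_subset[of _ "{..tf} \<times> {..tf}"]) (auto simp: Psi_def)

lemma step_mem_Psi_diff_Psi_q:
  assumes "t \<in> {to..<tf} - Psi_q_tilde q to tf"
  shows "(t, t + 1) \<in> Psi to tf - Psi_q q to tf"
  using assms by (auto simp: Psi_def Psi_q_def Psi_q_tilde_def)

lemma psi_steps_subset_windows:
  "(\<lambda>t. psi p q r t (t + 1)) ` ({to..<tf} - Psi_q_tilde q to tf)
     \<subseteq> (\<lambda>(t0, t1). psi p q r t0 t1) ` (Psi to tf - Psi_q q to tf)"
  by (rule image_subsetI, rule rev_image_eqI[OF step_mem_Psi_diff_Psi_q]) simp_all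

lemma Max_psi_windows_eq_Max_steps:
  fixes p q :: "nat \<Rightarrow> real" and r :: "int \<Rightarrow> real" and \<alpha> :: real and to tf :: nat
  assumes "\<And>t. t \<in> {to..<tf} \<Longrightarrow> q t \<ge> 0"
    and "\<And>t. t \<in> {to..<tf} \<Longrightarrow> q t = 0 \<Longrightarrow> p t = 0"
    and "\<And>\<tau>. \<tau> > 0 \<Longrightarrow> r \<tau> = \<alpha> * of_int \<tau>" and "\<alpha> \<le> 0"
  shows "Max ((\<lambda>(t0, t1). psi p q r t0 t1) ` (Psi to tf - Psi_q q to tf))
       = Max ((\<lambda>t. psi p q r t (t + 1)) ` ({to..<tf} - Psi_q_tilde q to tf))"
    (is "Max ?windows = Max ?steps")
proof (rule Max_eq_if)
  show "finite ?windows" using finite_Psi by simp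
  show "finite ?steps" by simp
  show "\<forall>b\<in>?steps. \<exists>a\<in>?windows. b \<le> a"
    using psi_steps_subset_windows[of p q r to tf] by (meson order.refl subsetD)
  show "\<forall>a\<in>?windows. \<exists>b\<in>?steps. a \<le> b"
  proof
    fix a assume "a \<in> ?windows"
    then obtain t0 t1 where "(t0, t1) \<in> Psi to tf - Psi_q q to tf" "a = psi p q r t0 t1"
      by auto
    then show "\<exists>b\<in>?steps. a \<le> b"
      using psi_window_le_step[OF assms] by auto
  qed
qed

lemma Min_psi_windows_eq_Min_steps:
  fixes p q :: "nat \<Rightarrow> real" and r :: "int \<Rightarrow> real" and \<alpha> :: real and to tf :: nat
  assumes "\<And>t. t \<in> {to..<tf} \<Longrightarrow> q t \<ge> 0"
    and "\<And>t. t \<in> {to..<tf} \<Longrightarrow> q t = 0 \<Longrightarrow> p t = 0"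
    and "\<And>\<tau>. \<tau> > 0 \<Longrightarrow> r \<tau> = \<alpha> * of_int \<tau>" and "\<alpha> \<ge> 0"
  shows "Min ((\<lambda>(t0, t1). psi p q r t0 t1) ` (Psi to tf - Psi_q q to tf))
       = Min ((\<lambda>t. psi p q r t (t + 1)) ` ({to..<tf} - Psi_q_tilde q to tf))"
    (is "Min ?windows = Min ?steps")
proof (rule Min_eq_if)
  show "finite ?windows" using finite_Psi by simp
  show "finite ?steps" by simp
  show "\<forall>b\<in>?steps. \<exists>a\<in>?windows. a \<le> b"
    using psi_steps_subset_windows[of p q r to tf] by (meson order.refl subsetD)
  show "\<forall>a\<in>?windows. \<exists>b\<in>?steps. b \<le> a"
  proof
    fix a assume "a \<in> ?windows"
    then obtain t0 t1 where "(t0, t1) \<in> Psi to tf - Psi_q q to tf" "a = psi p q r t0 t1"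
      by auto
    then show "\<exists>b\<in>?steps. b \<le> a"
      using psi_step_le_window[OF assms] by auto
  qed
qed

theorem corollary2:
  fixes p q :: "nat \<Rightarrow> real" and r :: "int \<Rightarrow> real" and \<alpha> :: real and to tf :: nat
  assumes "to < tf"
    and "\<forall>t\<in>{to..<tf}. q t \<ge> 0"
    and "\<forall>t\<in>{to..<tf}. q t = 0 \<longrightarrow> p t = 0"
    and "\<forall>\<tau>::int. \<tau> > 0 \<longrightarrow> r \<tau> = \<alpha> * of_int \<tau>"
  shows "((\<forall>\<tau>::int. \<tau> > 0 \<longrightarrow> r \<tau> \<le> 0) \<longrightarrow>
            Max ((\<lambda>(t0, t1). psi p q r t0 t1) ` (Psi to tf - Psi_q q to tf))
          = Max ((\<lambda>t. psi p q r t (t + 1)) ` ({to..<tf} - Psi_q_tilde q to tf)))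
       \<and> ((\<forall>\<tau>::int. \<tau> > 0 \<longrightarrow> r \<tau> \<ge> 0) \<longrightarrow>
            Min ((\<lambda>(t0, t1). psi p q r t0 t1) ` (Psi to tf - Psi_q q to tf))
          = Min ((\<lambda>t. psi p q r t (t + 1)) ` ({to..<tf} - Psi_q_tilde q to tf)))"
proof -
  \<comment> \<open>to < tf is not needed: without steps with q t \<noteq> 0 both sides are the same junk value Max {} or Min {}.\<close>
  note hyps = assms(2-4)[rule_format]
  have r_one: "r 1 = \<alpha>"
    using hyps(3)[of 1] by simp
  have "\<alpha> \<le> 0" if "\<forall>\<tau>::int. \<tau> > 0 \<longrightarrow> r \<tau> \<le> 0"
    using that[rule_format, of 1] r_one by simp
  moreover have "\<alpha> \<ge> 0" if "\<forall>\<tau>::int. \<tau> > 0 \<longrightarrow> r \<tau> \<ge> 0"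
    using that[rule_format, of 1] r_one by simp
  ultimately show ?thesis
    using Max_psi_windows_eq_Max_steps[where p = p and q = q and r = r, OF hyps]
      Min_psi_windows_eq_Min_steps[where p = p and q = q and r = r, OF hyps] by blast
qed

end
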